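(* Let $U$ be Haar distributed on $\mathbb U(n)$ and $T_{p,q}=\sum_{i\le p,\,j\le q}|U_{ij}|^2$. There is a constant $C$ such that for all $n\ge 2$ and all $1\le p,q\le n$, $$|\kappa_4(T_{p,q})|\le C\,\frac{p^2q^2}{n^4},$$ where $\kappa_4(X)$ denotes the fourth classical cumulant of the random variable $X$. *)

theory Defs
  imports "HOL-Probability.Probability"
begin

text \<open>n x n complex matrices are represented as functions nat => nat => complex,
  indices 0..n-1, entries outside the n x n block equal to 0.\<close>

type_synonym cmatrix = "nat \<Rightarrow> nat \<Rightarrow> complex"

definition mat_mult :: "nat \<Rightarrow> cmatrix \<Rightarrow> cmatrix \<Rightarrow> cmatrix" where
  "mat_mult n A B = (\<lambda>i j. if i < n \<and> j < n then (\<Sum>k<n. A i k * B k j) else 0)"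

definition mat_adj :: "nat \<Rightarrow> cmatrix \<Rightarrow> cmatrix" where
  "mat_adj n A = (\<lambda>i j. if i < n \<and> j < n then cnj (A j i) else 0)"

definition mat_id :: "nat \<Rightarrow> cmatrix" where
  "mat_id n = (\<lambda>i j. if i < n \<and> j < n \<and> i = j then 1 else 0)"

definition unitary_mat :: "nat \<Rightarrow> cmatrix \<Rightarrow> bool" where
  "unitary_mat n U \<longleftrightarrow>
     (\<forall>i j. (n \<le> i \<or> n \<le> j) \<longrightarrow> U i j = 0) \<and>
     mat_mult n U (mat_adj n U) = mat_id n \<and>
     mat_mult n (mat_adj n U) U = mat_id n"

text \<open>Haar (probability) measure on U(n), viewed as a Borel probability measure
  on the space of matrices (product topology), concentrated on U(n) and invariant
  under left multiplication by unitaries (which characterises Haar measure on the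
  compact group U(n)).\<close>
definition haar_unitary :: "nat \<Rightarrow> cmatrix measure \<Rightarrow> bool" where
  "haar_unitary n \<mu> \<longleftrightarrow>
     prob_space \<mu> \<and> sets \<mu> = sets borel \<and>
     (AE U in \<mu>. unitary_mat n U) \<and>
     (\<forall>V. unitary_mat n V \<longrightarrow> distr \<mu> borel (mat_mult n V) = \<mu>)"

definition cumulant4 :: "'a measure \<Rightarrow> ('a \<Rightarrow> real) \<Rightarrow> real" where
  "cumulant4 M X =
     (let m = integral\<^sup>L M X in
       integral\<^sup>L M (\<lambda>x. (X x - m) ^ 4) - 3 * (integral\<^sup>L M (\<lambda>x. (X x - m) ^ 2))\<^sup>2)"

text \<open>T_{p,q}(U) = sum over i <= p, j <= q of |U_ij|^2 (0-based indices).\<close>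
definition T_block :: "nat \<Rightarrow> nat \<Rightarrow> cmatrix \<Rightarrow> real" where
  "T_block p q U = (\<Sum>i<p. \<Sum>j<q. (cmod (U i j))\<^sup>2)"

end

theory Submission
  imports Defs
begin

(*
  Write z_ij = |U_ij|^2, d_i = (sum_{j<q} z_ij) - q/n for the centred row sums, and
  X = sum_{i<p} d_i = T_{p,q} - pq/n.  Since E[X] = 0 and Var(X)^2 <= E[X^4], we have
  |kappa_4(T_{p,q})| <= 3 E[X^4], so it suffices to show E[X^4] = O(p^2 q^2 / n^4).
  The argument uses only three symmetries of Haar measure: invariance under left
  multiplication by a row transposition, by a 2x2 Hadamard rotation, and under U -> U^*.
*)

lemma continuous_on_matrix:
  fixes F :: "'a::topological_space \<Rightarrow> cmatrix"
  assumes "\<And>i j. continuous_on UNIV (\<lambda>x. F x i j)"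
  shows "continuous_on UNIV F"
  by (intro continuous_on_coordinatewise_then_product assms)

lemma continuous_on_entry: "continuous_on UNIV (\<lambda>U::cmatrix. U i j)"
proof -
  have "continuous_on UNIV ((\<lambda>v::nat\<Rightarrow>complex. v j) \<circ> (\<lambda>U::cmatrix. U i))"
    by (rule continuous_on_compose)
      (auto intro: continuous_on_subset[OF continuous_on_product_coordinates])
  then show ?thesis by (simp add: o_def)
qed

lemma continuous_on_if_zero:
  "continuous_on S F \<Longrightarrow> continuous_on S (\<lambda>x. if c then F x else (0::complex))"
  by (cases c) simp_all

lemma continuous_on_mat_mult: "continuous_on UNIV (mat_mult n V)"
  unfolding mat_mult_def
  by (intro continuous_on_matrix continuous_on_if_zero continuous_intros continuous_on_entry)

lemma continuous_on_mat_adj: "continuous_on UNIV (mat_adj n)"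
  unfolding mat_adj_def
  by (intro continuous_on_matrix continuous_on_if_zero continuous_on_cnj continuous_on_entry)

text \<open>The map \<open>(U, W) \<mapsto> W\<^sup>* U\<close>, needed for the Fubini argument behind adjoint invariance.\<close>
lemma continuous_on_adj_mult_pair:
  "continuous_on UNIV (\<lambda>x::cmatrix \<times> cmatrix. mat_mult n (mat_adj n (snd x)) (fst x))"
proof -
  have entries: "continuous_on UNIV (\<lambda>x::cmatrix \<times> cmatrix. fst x i j)"
    "continuous_on UNIV (\<lambda>x::cmatrix \<times> cmatrix. snd x i j)" for i j
    by (rule continuous_on_compose2[OF continuous_on_entry];
        simp add: continuous_on_fst continuous_on_snd)+
  show ?thesis
    unfolding mat_mult_def mat_adj_def
    by (intro continuous_on_matrix continuous_on_if_zero continuous_intros entries)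
qed

definition entry_sq :: "nat \<Rightarrow> nat \<Rightarrow> cmatrix \<Rightarrow> real" where
  "entry_sq i j U = (cmod (U i j))\<^sup>2"

lemma entry_sq_nonneg [simp]: "0 \<le> entry_sq i j U"
  by (simp add: entry_sq_def)

lemma borel_measurable_entry_sq [measurable]: "entry_sq i j \<in> borel_measurable borel"
  unfolding entry_sq_def
  by (intro borel_measurable_continuous_onI continuous_intros continuous_on_entry)


section \<open>Unitary matrices\<close>

definition zero_outside :: "nat \<Rightarrow> cmatrix \<Rightarrow> bool" where
  "zero_outside n U \<longleftrightarrow> (\<forall>i j. (n \<le> i \<or> n \<le> j) \<longrightarrow> U i j = 0)"

lemma unitary_zero_outside: "unitary_mat n U \<Longrightarrow> zero_outside n U"
  by (simp add: unitary_mat_def zero_outside_def)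

lemma mat_adj_adj: "zero_outside n U \<Longrightarrow> mat_adj n (mat_adj n U) = U"
  by (auto simp: zero_outside_def mat_adj_def fun_eq_iff)

lemma unitary_mat_adj: "unitary_mat n U \<Longrightarrow> unitary_mat n (mat_adj n U)"
  using mat_adj_adj[OF unitary_zero_outside] unfolding unitary_mat_def
  by (auto simp: mat_adj_def)

lemma mat_mult_adj_eq_adj_mult: "mat_mult n (mat_adj n W) U = mat_adj n (mat_mult n (mat_adj n U) W)"
  by (auto simp: mat_mult_def mat_adj_def fun_eq_iff mult.commute intro!: sum.cong)

lemma unitary_selfadjoint_involution:
  assumes "zero_outside n A" "mat_adj n A = A" "mat_mult n A A = mat_id n"
  shows "unitary_mat n A"
  using assms unfolding unitary_mat_def zero_outside_def by simp

lemma unitary_column_sum: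
  assumes "unitary_mat n U" "j < n"
  shows "(\<Sum>i<n. entry_sq i j U) = 1"
proof -
  have "mat_mult n (mat_adj n U) U j j = mat_id n j j"
    using assms(1) by (simp add: unitary_mat_def)
  then have "(\<Sum>i<n. cnj (U i j) * U i j) = 1"
    using assms(2) by (simp add: mat_mult_def mat_adj_def mat_id_def)
  moreover have "(\<Sum>i<n. cnj (U i j) * U i j) = complex_of_real (\<Sum>i<n. entry_sq i j U)"
    by (simp add: entry_sq_def complex_norm_square mult.commute del: of_real_power)
  ultimately show ?thesis by (metis of_real_eq_1_iff)
qed

text \<open>In particular every entry has modulus at most one, so all our random variables are bounded.\<close>
lemma unitary_entry_sq_le_1:
  assumes "unitary_mat n U"
  shows "entry_sq i j U \<le> 1"
proof (cases "i < n \<and> j < n")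
  case True
  then have "entry_sq i j U \<le> (\<Sum>r<n. entry_sq r j U)"
    by (intro member_le_sum) auto
  then show ?thesis using unitary_column_sum[OF assms] True by simp
next
  case False
  then show ?thesis using unitary_zero_outside[OF assms] by (auto simp: zero_outside_def entry_sq_def)
qed

definition swap_idx :: "nat \<Rightarrow> nat \<Rightarrow> nat \<Rightarrow> nat" where
  "swap_idx i k r = (if r = i then k else if r = k then i else r)"

definition swap_rows :: "nat \<Rightarrow> nat \<Rightarrow> cmatrix \<Rightarrow> cmatrix" where
  "swap_rows i k U = (\<lambda>r c. U (swap_idx i k r) c)"

definition transposition_mat :: "nat \<Rightarrow> nat \<Rightarrow> nat \<Rightarrow> cmatrix" where
  "transposition_mat n i k = (\<lambda>r c. if r < n \<and> c < n \<and> c = swap_idx i k r then 1 else 0)"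

lemma swap_idx_lt: "i < n \<Longrightarrow> k < n \<Longrightarrow> r < n \<Longrightarrow> swap_idx i k r < n"
  by (simp add: swap_idx_def)

lemma entry_sq_swap_rows [simp]: "entry_sq r c (swap_rows i k U) = entry_sq (swap_idx i k r) c U"
  by (simp add: entry_sq_def swap_rows_def)

lemma continuous_on_swap_rows: "continuous_on UNIV (swap_rows i k)"
  unfolding swap_rows_def by (intro continuous_on_matrix continuous_on_entry)

lemma mat_mult_transposition_mat:
  assumes "i < n" "k < n" "zero_outside n U"
  shows "mat_mult n (transposition_mat n i k) U = swap_rows i k U"
proof (intro ext)
  fix r c
  show "mat_mult n (transposition_mat n i k) U r c = swap_rows i k U r c"
  proof (cases "r < n \<and> c < n")
    case True
    have "(\<Sum>j<n. transposition_mat n i k r j * U j c) = (\<Sum>j<n. if j = swap_idx i k r then U j c else 0)"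
      using True by (intro sum.cong) (auto simp: transposition_mat_def)
    also have "\<dots> = U (swap_idx i k r) c"
      using True swap_idx_lt[OF assms(1,2)] by simp
    finally show ?thesis using True by (simp add: mat_mult_def swap_rows_def)
  next
    case False
    then show ?thesis
      using assms by (auto simp: mat_mult_def swap_rows_def zero_outside_def swap_idx_def)
  qed
qed

lemma transposition_mat_unitary:
  assumes "i < n" "k < n"
  shows "unitary_mat n (transposition_mat n i k)"
proof (rule unitary_selfadjoint_involution)
  show "zero_outside n (transposition_mat n i k)"
    by (auto simp: zero_outside_def transposition_mat_def)
  show "mat_adj n (transposition_mat n i k) = transposition_mat n i k"
    by (auto simp: mat_adj_def transposition_mat_def swap_idx_def fun_eq_iff)
  show "mat_mult n (transposition_mat n i k) (transposition_mat n i k) = mat_id n"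
    using assms
    by (subst mat_mult_transposition_mat)
      (auto simp: zero_outside_def transposition_mat_def swap_rows_def mat_id_def swap_idx_def fun_eq_iff)
qed

text \<open>The matrix \<open>diag([[1, 1], [1, -1]]/\<surd>2, 1, ..., 1)\<close>.\<close>
definition sq2 :: complex where
  "sq2 = complex_of_real (1 / sqrt 2)"

definition hadamard_mat :: "nat \<Rightarrow> cmatrix" where
  "hadamard_mat n = (\<lambda>r c. if r < n \<and> c < n then
      (if r < 2 \<and> c < 2 then (if r = 1 \<and> c = 1 then - sq2 else sq2) else if r = c then 1 else 0)
    else 0)"

lemma sq2_sq: "2 * (sq2 * sq2) = 1"
  unfolding sq2_def by (simp flip: of_real_mult)

lemma cmod_sq2_mult_sq: "(cmod (sq2 * w))\<^sup>2 = (cmod w)\<^sup>2 / 2"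
proof -
  have "cmod sq2 = 1 / sqrt 2" unfolding sq2_def norm_of_real by simp
  then have "(cmod (sq2 * w))\<^sup>2 = (1 / sqrt 2)\<^sup>2 * (cmod w)\<^sup>2"
    by (simp only: norm_mult power_mult_distrib)
  then show ?thesis by (simp add: power_divide)
qed

lemma sum_first_two:
  assumes "2 \<le> n" "\<And>j. 2 \<le> j \<Longrightarrow> j < n \<Longrightarrow> f j = 0"
  shows "(\<Sum>j<n. f j) = f 0 + f (1::nat)"
proof -
  have "(\<Sum>j<n. f j) = (\<Sum>j<2. f j)"
    using assms by (intro sum.mono_neutral_right) auto
  then show ?thesis by (simp add: numeral_2_eq_2)
qed

lemma hadamard_mat_unitary:
  assumes "2 \<le> n"
  shows "unitary_mat n (hadamard_mat n)"
proof (rule unitary_selfadjoint_involution)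
  show "zero_outside n (hadamard_mat n)"
    by (auto simp: zero_outside_def hadamard_mat_def)
  show "mat_adj n (hadamard_mat n) = hadamard_mat n"
    by (auto simp: mat_adj_def hadamard_mat_def sq2_def fun_eq_iff)
  show "mat_mult n (hadamard_mat n) (hadamard_mat n) = mat_id n"
  proof (intro ext)
    fix r c
    show "mat_mult n (hadamard_mat n) (hadamard_mat n) r c = mat_id n r c"
    proof (cases "r < n \<and> c < n")
      case rc: True
      show ?thesis
      proof (cases "r < 2")
        case True
        have "(\<Sum>j<n. hadamard_mat n r j * hadamard_mat n j c)
            = hadamard_mat n r 0 * hadamard_mat n 0 c + hadamard_mat n r 1 * hadamard_mat n 1 c"
          using True assms by (intro sum_first_two) (auto simp: hadamard_mat_def)
        then show ?thesis
          using rc True assms sq2_sq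
          by (cases "c < 2") (auto simp: mat_mult_def mat_id_def hadamard_mat_def less_2_cases_iff)
      next
        case False
        have "(\<Sum>j<n. hadamard_mat n r j * hadamard_mat n j c) = (\<Sum>j<n. if j = r then hadamard_mat n j c else 0)"
          using rc False by (intro sum.cong) (auto simp: hadamard_mat_def)
        then show ?thesis
          using rc False by (auto simp: mat_mult_def mat_id_def hadamard_mat_def)
      qed
    qed (auto simp: mat_mult_def mat_id_def)
  qed
qed

lemma mat_mult_hadamard_first_column:
  assumes "2 \<le> n"
  shows "mat_mult n (hadamard_mat n) U 0 0 = sq2 * (U 0 0 + U 1 0)"
    and "mat_mult n (hadamard_mat n) U 1 0 = sq2 * (U 0 0 - U 1 0)"
proof -
  have "(\<Sum>j<n. hadamard_mat n 0 j * U j 0) = hadamard_mat n 0 0 * U 0 0 + hadamard_mat n 0 1 * U 1 0"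
    "(\<Sum>j<n. hadamard_mat n 1 j * U j 0) = hadamard_mat n 1 0 * U 0 0 + hadamard_mat n 1 1 * U 1 0"
    using assms by (intro sum_first_two; auto simp: hadamard_mat_def)+
  then show "mat_mult n (hadamard_mat n) U 0 0 = sq2 * (U 0 0 + U 1 0)"
    and "mat_mult n (hadamard_mat n) U 1 0 = sq2 * (U 0 0 - U 1 0)"
    using assms by (simp_all add: mat_mult_def hadamard_mat_def algebra_simps)
qed


text \<open>All random variables in this development are measurable and essentially bounded;
  this class is closed under the arithmetic operations and consists of integrable
  functions on a finite measure space.\<close>
definition bounded_rv :: "'a measure \<Rightarrow> ('a \<Rightarrow> real) \<Rightarrow> bool" where
  "bounded_rv M f \<longleftrightarrow> f \<in> borel_measurable M \<and> (\<exists>B. AE x in M. \<bar>f x\<bar> \<le> B)"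

lemma bounded_rv_measurable: "bounded_rv M f \<Longrightarrow> f \<in> borel_measurable M"
  by (simp add: bounded_rv_def)

lemma bounded_rv_const: "bounded_rv M (\<lambda>x. c)"
  unfolding bounded_rv_def by auto

lemma bounded_rv_add:
  assumes "bounded_rv M f" "bounded_rv M g"
  shows "bounded_rv M (\<lambda>x. f x + g x)"
proof -
  obtain B1 B2 where "AE x in M. \<bar>f x\<bar> \<le> B1" "AE x in M. \<bar>g x\<bar> \<le> B2"
    using assms by (auto simp: bounded_rv_def)
  then have "AE x in M. \<bar>f x + g x\<bar> \<le> B1 + B2"
    by eventually_elim (use abs_triangle_ineq in \<open>smt (verit)\<close>)
  then show ?thesis using assms by (auto simp: bounded_rv_def)
qed

lemma bounded_rv_mult:
  assumes "bounded_rv M f" "bounded_rv M g"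
  shows "bounded_rv M (\<lambda>x. f x * g x)"
proof -
  obtain B1 B2 where "AE x in M. \<bar>f x\<bar> \<le> B1" "AE x in M. \<bar>g x\<bar> \<le> B2"
    using assms by (auto simp: bounded_rv_def)
  then have "AE x in M. \<bar>f x * g x\<bar> \<le> B1 * B2"
    by eventually_elim (auto simp: abs_mult intro!: mult_mono)
  then show ?thesis using assms by (auto simp: bounded_rv_def)
qed

lemma bounded_rv_diff: "bounded_rv M f \<Longrightarrow> bounded_rv M g \<Longrightarrow> bounded_rv M (\<lambda>x. f x - g x)"
  using bounded_rv_add[of M f "\<lambda>x. -1 * g x"] bounded_rv_mult[of M "\<lambda>x. -1" g] by (simp add: bounded_rv_const)

lemma bounded_rv_divide: "bounded_rv M f \<Longrightarrow> bounded_rv M (\<lambda>x. f x / c)"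
  using bounded_rv_mult[of M f "\<lambda>x. 1 / c"] by (simp add: bounded_rv_const)

lemma bounded_rv_power: "bounded_rv M f \<Longrightarrow> bounded_rv M (\<lambda>x. f x ^ k)"
  by (induction k) (simp_all add: bounded_rv_mult bounded_rv_const)

lemma bounded_rv_sum: "(\<And>i. i \<in> A \<Longrightarrow> bounded_rv M (f i)) \<Longrightarrow> bounded_rv M (\<lambda>x. \<Sum>i\<in>A. f i x)"
  by (induction A rule: infinite_finite_induct) (simp_all add: bounded_rv_add bounded_rv_const)

lemmas bounded_rv_intros =
  bounded_rv_const bounded_rv_add bounded_rv_mult bounded_rv_diff bounded_rv_divide bounded_rv_power
  bounded_rv_sum

lemma (in finite_measure) integrable_bounded_rv:
  assumes "bounded_rv M f"
  shows "integrable M f"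
proof -
  obtain B where "f \<in> borel_measurable M" "AE x in M. \<bar>f x\<bar> \<le> B"
    using assms by (auto simp: bounded_rv_def)
  then show ?thesis by (intro integrable_const_bound[where B = B]) simp_all
qed


lemma square_times_square_le:
  fixes X D p :: real
  assumes "p > 0"
  shows "D\<^sup>2 * X\<^sup>2 \<le> X ^ 4 / (6 * p) + (3 * p / 2) * D ^ 4"
proof -
  have "0 \<le> (X\<^sup>2 - 3 * p * D\<^sup>2)\<^sup>2" by simp
  then have "6 * p * (D\<^sup>2 * X\<^sup>2) \<le> X ^ 4 + 9 * p\<^sup>2 * D ^ 4"
    by (simp add: power2_eq_square eval_nat_numeral algebra_simps)
  then show ?thesis using assms by (simp add: field_simps power2_eq_square)
qed

text \<open>The pointwise inequality behind the exchangeable-pair estimate.\<close>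
lemma cube_difference_bound:
  fixes X D p :: real
  assumes p: "p > 0"
  shows "D * (X ^ 3 - (X - D) ^ 3) \<le> (X ^ 4 + (X - D) ^ 4) / (4 * p) + (9 * p / 2) * D ^ 4"
proof -
  define Y where "Y = X - D"
  have "D * (X ^ 3 - Y ^ 3) = D\<^sup>2 * (X\<^sup>2 + X * Y + Y\<^sup>2)"
    unfolding Y_def by (simp add: power2_eq_square power3_eq_cube algebra_simps)
  also have "\<dots> \<le> D\<^sup>2 * ((3 / 2) * (X\<^sup>2 + Y\<^sup>2))"
    using sum_squares_ge_zero[of "X - Y" 0]
    by (intro mult_left_mono) (auto simp: power2_eq_square algebra_simps)
  also have "\<dots> = (3 / 2) * (D\<^sup>2 * X\<^sup>2 + D\<^sup>2 * Y\<^sup>2)"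
    by (simp add: algebra_simps)
  also have "\<dots> \<le> (3 / 2) * ((X ^ 4 / (6 * p) + (3 * p / 2) * D ^ 4) + (Y ^ 4 / (6 * p) + (3 * p / 2) * D ^ 4))"
    using square_times_square_le[OF p, of D X] square_times_square_le[OF p, of D Y] by simp
  also have "\<dots> = (X ^ 4 + Y ^ 4) / (4 * p) + (9 * p / 2) * D ^ 4"
    using p by (simp add: field_simps)
  finally show ?thesis unfolding Y_def .
qed

lemma power4_diff_le:
  fixes u v :: real
  shows "(u - v) ^ 4 \<le> 8 * (u ^ 4 + v ^ 4)"
proof -
  have "(u - v)\<^sup>2 \<le> 2 * (u\<^sup>2 + v\<^sup>2)"
    using sum_squares_ge_zero[of "u + v" 0] by (simp add: power2_eq_square algebra_simps)
  then have "((u - v)\<^sup>2)\<^sup>2 \<le> (2 * (u\<^sup>2 + v\<^sup>2))\<^sup>2"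
    by (intro power_mono) auto
  also have "\<dots> \<le> 8 * (u ^ 4 + v ^ 4)"
    using sum_squares_ge_zero[of "u\<^sup>2 - v\<^sup>2" 0] by (simp add: power2_eq_square eval_nat_numeral algebra_simps)
  finally show ?thesis by simp
qed

lemma power4_diff_nonneg_le:
  fixes z c :: real
  assumes "0 \<le> z" "0 \<le> c"
  shows "(z - c) ^ 4 \<le> z ^ 4 + c ^ 4"
proof (cases "c \<le> z")
  case True
  then have "(z - c) ^ 4 \<le> z ^ 4" using assms by (intro power_mono) auto
  then show ?thesis using assms by (smt (verit) zero_le_power)
next
  case False
  have "(z - c) ^ 4 = (c - z) ^ 4" by (simp add: eval_nat_numeral algebra_simps)
  also have "\<dots> \<le> c ^ 4" using False assms by (intro power_mono) auto
  finally show ?thesis using assms by (smt (verit) zero_le_power)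
qed

text \<open>Either \<open>Z \<le> 4V\<close>, or both \<open>A\<close> and \<open>B\<close> are at least \<open>Z/8\<close>; in both cases \<open>Z\<^sup>a\<close> is
  controlled by the two mixed terms.\<close>
lemma power_split_bound:
  fixes Z V A B :: real
  assumes nonneg: "0 \<le> Z" "0 \<le> V" "0 \<le> A" "0 \<le> B" and a: "1 \<le> a"
    and large: "4 * V < Z \<Longrightarrow> Z / 8 \<le> A \<and> Z / 8 \<le> B"
  shows "Z ^ a \<le> 4 * Z ^ (a - 1) * V + 8 ^ a * A ^ (a - 1) * B"
proof -
  obtain b where b: "a = Suc b" using a by (cases a) auto
  have "Z ^ Suc b \<le> 4 * Z ^ b * V + 8 ^ Suc b * A ^ b * B"
  proof (cases "4 * V < Z")
    case False
    then have "Z ^ b * Z \<le> Z ^ b * (4 * V)" using nonneg by (intro mult_left_mono) auto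
    moreover have "0 \<le> 8 ^ Suc b * A ^ b * B" using nonneg by simp
    ultimately show ?thesis by (simp add: algebra_simps)
  next
    case True
    with large have "Z / 8 \<le> A" "Z / 8 \<le> B" by auto
    then have "(Z / 8) ^ b * (Z / 8) \<le> A ^ b * B"
      using nonneg by (intro mult_mono power_mono) auto
    then have "Z ^ Suc b \<le> 8 ^ Suc b * (A ^ b * B)"
      by (simp add: field_simps)
    moreover have "0 \<le> 4 * Z ^ b * V" using nonneg by simp
    ultimately show ?thesis by (simp add: algebra_simps)
  qed
  then show ?thesis using b by simp
qed

text \<open>Pointwise form of the Hadamard step: with \<open>u = U\<^sub>0\<^sub>0\<close>, \<open>v = U\<^sub>1\<^sub>0\<close>, the two rotated
  entries are \<open>(u \<pm> v)/\<surd>2\<close>; if \<open>|v|\<close> is small compared to \<open>|u|\<close>, both are large.\<close>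
lemma hadamard_power_bound:
  fixes u v :: complex
  assumes a: "1 \<le> a"
  shows "((cmod u)\<^sup>2) ^ a \<le> 4 * ((cmod u)\<^sup>2) ^ (a - 1) * (cmod v)\<^sup>2
     + 8 ^ a * ((cmod (sq2 * (u + v)))\<^sup>2) ^ (a - 1) * (cmod (sq2 * (u - v)))\<^sup>2"
proof (rule power_split_bound[OF _ _ _ _ a])
  assume "4 * (cmod v)\<^sup>2 < (cmod u)\<^sup>2"
  then have "(2 * cmod v)\<^sup>2 < (cmod u)\<^sup>2" by (simp add: power_mult_distrib)
  then have lt: "2 * cmod v < cmod u" by (rule power_less_imp_less_base) simp
  have "cmod u / 2 \<le> cmod (u + v)" "cmod u / 2 \<le> cmod (u - v)"
    using norm_diff_ineq[of u v] norm_triangle_ineq2[of u v] lt by linarith+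
  then have "(cmod u / 2)\<^sup>2 \<le> (cmod (u + v))\<^sup>2" "(cmod u / 2)\<^sup>2 \<le> (cmod (u - v))\<^sup>2"
    by (intro power_mono; simp)+
  then show "(cmod u)\<^sup>2 / 8 \<le> (cmod (sq2 * (u + v)))\<^sup>2 \<and> (cmod u)\<^sup>2 / 8 \<le> (cmod (sq2 * (u - v)))\<^sup>2"
    by (simp add: cmod_sq2_mult_sq power_divide)
qed simp_all


section \<open>Two estimates for integrals of bounded random variables\<close>

text \<open>Suppose a measure-preserving transformation maps
  \<open>X\<close> to \<open>X - D\<close> and \<open>D\<close> to \<open>-D\<close>; then \<open>E[D (X - D)\<^sup>3] = -E[D X\<^sup>3]\<close> and
  \<open>E[(X - D)\<^sup>4] = E[X\<^sup>4]\<close>, and \<open>E[D X\<^sup>3]\<close> is small compared with \<open>E[X\<^sup>4]\<close>.\<close>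
lemma (in finite_measure) exchangeable_pair_bound:
  fixes X D :: "'a \<Rightarrow> real" and p :: real
  assumes bounded: "bounded_rv M X" "bounded_rv M D" and p: "p > 0"
    and antisym: "(\<integral>x. D x * (X x - D x) ^ 3 \<partial>M) = - (\<integral>x. D x * X x ^ 3 \<partial>M)"
    and same4: "(\<integral>x. (X x - D x) ^ 4 \<partial>M) = (\<integral>x. X x ^ 4 \<partial>M)"
  shows "(\<integral>x. D x * X x ^ 3 \<partial>M) \<le> (\<integral>x. X x ^ 4 \<partial>M) / (4 * p) + (9 * p / 4) * (\<integral>x. D x ^ 4 \<partial>M)"
proof -
  note int = integrable_bounded_rv bounded_rv_intros bounded
  have "2 * (\<integral>x. D x * X x ^ 3 \<partial>M) = (\<integral>x. D x * (X x ^ 3 - (X x - D x) ^ 3) \<partial>M)"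
    using antisym by (simp add: right_diff_distrib int)
  also have "\<dots> \<le> (\<integral>x. (X x ^ 4 + (X x - D x) ^ 4) / (4 * p) + (9 * p / 2) * D x ^ 4 \<partial>M)"
    by (intro integral_mono int cube_difference_bound p)
  also have "\<dots> = 2 * (\<integral>x. X x ^ 4 \<partial>M) / (4 * p) + (9 * p / 2) * (\<integral>x. D x ^ 4 \<partial>M)"
    using same4 by (simp add: int)
  finally show ?thesis by (simp add: field_simps)
qed

text \<open>The fourth cumulant of a bounded random variable is at most three times its
  fourth central moment in absolute value, since \<open>Var(X)\<^sup>2 \<le> E[(X - EX)\<^sup>4]\<close>.\<close>
lemma (in prob_space) abs_cumulant4_le:
  assumes X: "bounded_rv M X"
  shows "\<bar>cumulant4 M X\<bar> \<le> 3 * (\<integral>x. (X x - expectation X) ^ 4 \<partial>M)"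
proof -
  define Y where "Y x = X x - expectation X" for x
  define v where "v = (\<integral>x. Y x ^ 2 \<partial>M)"
  have Y: "bounded_rv M Y" unfolding Y_def by (intro bounded_rv_intros X)
  note int = integrable_bounded_rv bounded_rv_intros Y
  have "0 \<le> (\<integral>x. (Y x ^ 2 - v) ^ 2 \<partial>M)" by simp
  also have "\<dots> = (\<integral>x. Y x ^ 4 - 2 * v * Y x ^ 2 + v ^ 2 \<partial>M)"
    by (rule Bochner_Integration.integral_cong) (auto simp: power2_eq_square eval_nat_numeral algebra_simps)
  also have "\<dots> = (\<integral>x. Y x ^ 4 \<partial>M) - v ^ 2"
    by (simp add: int prob_space v_def power2_eq_square)
  finally have "v ^ 2 \<le> (\<integral>x. Y x ^ 4 \<partial>M)" by simp
  moreover have "cumulant4 M X = (\<integral>x. Y x ^ 4 \<partial>M) - 3 * v ^ 2"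
    by (simp add: cumulant4_def Let_def Y_def v_def)
  moreover have "0 \<le> v ^ 2" by simp
  ultimately have "\<bar>cumulant4 M X\<bar> \<le> 3 * (\<integral>x. Y x ^ 4 \<partial>M)" by linarith
  then show ?thesis by (simp add: Y_def)
qed


section \<open>Invariance properties of Haar measure\<close>

locale haar =
  fixes n :: nat and \<mu> :: "cmatrix measure"
  assumes haar: "haar_unitary n \<mu>"
begin

sublocale prob_space \<mu>
  using haar by (simp add: haar_unitary_def)

lemma sets_haar: "sets \<mu> = sets borel"
  using haar by (simp add: haar_unitary_def)

lemma AE_unitary: "AE U in \<mu>. unitary_mat n U"
  using haar by (simp add: haar_unitary_def)

lemma distr_left_mult: "unitary_mat n V \<Longrightarrow> distr \<mu> borel (mat_mult n V) = \<mu>"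
  using haar by (simp add: haar_unitary_def)

lemma measurable_haar: "measurable \<mu> N = measurable borel N"
  by (rule measurable_cong_sets[OF sets_haar refl])

lemma measurable_continuous_map:
  fixes g :: "cmatrix \<Rightarrow> cmatrix"
  assumes "continuous_on UNIV g" "f \<in> borel_measurable \<mu>"
  shows "(\<lambda>U. f (g U)) \<in> borel_measurable \<mu>"
  using assms measurable_compose[OF borel_measurable_continuous_onI[of g]] by (simp add: measurable_haar)

lemma bounded_rv_entry_sq: "bounded_rv \<mu> (entry_sq i j)"
proof -
  have "AE U in \<mu>. \<bar>entry_sq i j U\<bar> \<le> 1"
    using AE_unitary by eventually_elim (simp add: unitary_entry_sq_le_1)
  then show ?thesis by (auto simp: bounded_rv_def measurable_haar)
qed

lemma integral_left_mult:
  fixes f :: "cmatrix \<Rightarrow> real"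
  assumes "unitary_mat n V" "f \<in> borel_measurable \<mu>"
  shows "(\<integral>U. f (mat_mult n V U) \<partial>\<mu>) = integral\<^sup>L \<mu> f"
proof -
  have "mat_mult n V \<in> measurable \<mu> borel"
    by (simp add: measurable_haar borel_measurable_continuous_onI[OF continuous_on_mat_mult])
  then have "integral\<^sup>L (distr \<mu> borel (mat_mult n V)) f = (\<integral>U. f (mat_mult n V U) \<partial>\<mu>)"
    using assms(2) by (intro integral_distr) (simp_all add: measurable_haar)
  then show ?thesis using distr_left_mult[OF assms(1)] by simp
qed

lemma nn_integral_left_mult:
  fixes f :: "cmatrix \<Rightarrow> ennreal"
  assumes "unitary_mat n V" "f \<in> borel_measurable borel"
  shows "(\<integral>\<^sup>+U. f (mat_mult n V U) \<partial>\<mu>) = (\<integral>\<^sup>+U. f U \<partial>\<mu>)"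
proof -
  have "mat_mult n V \<in> measurable \<mu> borel"
    by (simp add: measurable_haar borel_measurable_continuous_onI[OF continuous_on_mat_mult])
  then have "(\<integral>\<^sup>+U. f U \<partial>distr \<mu> borel (mat_mult n V)) = (\<integral>\<^sup>+U. f (mat_mult n V U) \<partial>\<mu>)"
    using assms(2) by (intro nn_integral_distr) simp_all
  then show ?thesis using distr_left_mult[OF assms(1)] by simp
qed

lemma bounded_rv_left_mult:
  assumes V: "unitary_mat n V" and f: "bounded_rv \<mu> f"
  shows "bounded_rv \<mu> (\<lambda>U. f (mat_mult n V U))"
proof -
  obtain B where f_meas: "f \<in> borel_measurable borel" and bound: "AE U in \<mu>. \<bar>f U\<bar> \<le> B"
    using f by (auto simp: bounded_rv_def measurable_haar)
  have "AE U in distr \<mu> borel (mat_mult n V). \<bar>f U\<bar> \<le> B"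
    unfolding distr_left_mult[OF V] by (rule bound)
  then have "AE U in \<mu>. \<bar>f (mat_mult n V U)\<bar> \<le> B"
    using f_meas by (subst (asm) AE_distr_iff)
      (auto simp: measurable_haar borel_measurable_continuous_onI[OF continuous_on_mat_mult])
  moreover have "(\<lambda>U. f (mat_mult n V U)) \<in> borel_measurable \<mu>"
    by (rule measurable_continuous_map[OF continuous_on_mat_mult bounded_rv_measurable[OF f]])
  ultimately show ?thesis by (auto simp: bounded_rv_def)
qed

lemma integral_swap_rows:
  fixes f :: "cmatrix \<Rightarrow> real"
  assumes "i < n" "k < n" "f \<in> borel_measurable \<mu>"
  shows "(\<integral>U. f (swap_rows i k U) \<partial>\<mu>) = integral\<^sup>L \<mu> f"
proof -
  have "(\<integral>U. f (swap_rows i k U) \<partial>\<mu>) = (\<integral>U. f (mat_mult n (transposition_mat n i k) U) \<partial>\<mu>)"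
  proof (rule integral_cong_AE)
    show "AE U in \<mu>. f (swap_rows i k U) = f (mat_mult n (transposition_mat n i k) U)"
      using AE_unitary by eventually_elim (simp add: mat_mult_transposition_mat unitary_zero_outside assms)
  qed (rule measurable_continuous_map[OF continuous_on_swap_rows assms(3)]
      measurable_continuous_map[OF continuous_on_mat_mult assms(3)])+
  also have "\<dots> = integral\<^sup>L \<mu> f"
    by (rule integral_left_mult[OF transposition_mat_unitary]) (use assms in auto)
  finally show ?thesis .
qed

text \<open>Integrating \<open>g(W\<^sup>* U)\<close> over two independent
  Haar matrices in either order, left invariance in \<open>U\<close> gives \<open>\<integral> g\<close>, while the identity
  \<open>W\<^sup>* U = (U\<^sup>* W)\<^sup>*\<close> and left invariance in \<open>W\<close> give \<open>\<integral> g(W\<^sup>*)\<close>.\<close>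
lemma nn_integral_adj:
  fixes g :: "cmatrix \<Rightarrow> ennreal"
  assumes g: "g \<in> borel_measurable borel"
  shows "(\<integral>\<^sup>+U. g (mat_adj n U) \<partial>\<mu>) = (\<integral>\<^sup>+U. g U \<partial>\<mu>)"
proof -
  have space_1: "emeasure \<mu> (space \<mu>) = 1" by (rule emeasure_space_1)
  interpret pair_prob_space \<mu> \<mu> by unfold_locales
  let ?G = "\<lambda>U W. g (mat_mult n (mat_adj n W) U)"
  have g_adj: "(\<lambda>U. g (mat_adj n U)) \<in> borel_measurable borel"
    using g borel_measurable_continuous_onI[OF continuous_on_mat_adj] by measurable
  have "sets (\<mu> \<Otimes>\<^sub>M \<mu>) = sets (borel \<Otimes>\<^sub>M borel :: (cmatrix \<times> cmatrix) measure)"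
    by (rule sets_pair_measure_cong[OF sets_haar sets_haar])
  also have "\<dots> = sets (borel :: (cmatrix \<times> cmatrix) measure)"
    by (metis borel_prod)
  finally have "measurable (\<mu> \<Otimes>\<^sub>M \<mu>) (borel :: ennreal measure) = measurable borel borel"
    by (rule measurable_cong_sets) simp
  moreover have "(\<lambda>x. ?G (fst x) (snd x)) \<in> borel_measurable borel"
    using g borel_measurable_continuous_onI[OF continuous_on_adj_mult_pair] by measurable
  ultimately have "(\<lambda>x. ?G (fst x) (snd x)) \<in> borel_measurable (\<mu> \<Otimes>\<^sub>M \<mu>)"
    by simp
  then have fubini: "(\<integral>\<^sup>+W. (\<integral>\<^sup>+U. ?G U W \<partial>\<mu>) \<partial>\<mu>) = (\<integral>\<^sup>+U. (\<integral>\<^sup>+W. ?G U W \<partial>\<mu>) \<partial>\<mu>)"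
    by (intro Fubini') (simp add: case_prod_beta)
  have "(\<integral>\<^sup>+W. (\<integral>\<^sup>+U. ?G U W \<partial>\<mu>) \<partial>\<mu>) = (\<integral>\<^sup>+W. (\<integral>\<^sup>+U. g U \<partial>\<mu>) \<partial>\<mu>)"
    by (rule nn_integral_cong_AE)
      (use AE_unitary in \<open>eventually_elim, simp add: nn_integral_left_mult[OF unitary_mat_adj g]\<close>)
  moreover have "(\<integral>\<^sup>+U. (\<integral>\<^sup>+W. ?G U W \<partial>\<mu>) \<partial>\<mu>) = (\<integral>\<^sup>+U. (\<integral>\<^sup>+W. g (mat_adj n W) \<partial>\<mu>) \<partial>\<mu>)"
  proof (intro nn_integral_cong_AE)
    show "AE U in \<mu>. (\<integral>\<^sup>+W. ?G U W \<partial>\<mu>) = (\<integral>\<^sup>+W. g (mat_adj n W) \<partial>\<mu>)"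
      using AE_unitary
    proof eventually_elim
      case (elim U)
      have "(\<integral>\<^sup>+W. ?G U W \<partial>\<mu>) = (\<integral>\<^sup>+W. (\<lambda>X. g (mat_adj n X)) (mat_mult n (mat_adj n U) W) \<partial>\<mu>)"
        using mat_mult_adj_eq_adj_mult[of n _ U] by (intro nn_integral_cong) metis
      also have "\<dots> = (\<integral>\<^sup>+W. g (mat_adj n W) \<partial>\<mu>)"
        by (rule nn_integral_left_mult[OF unitary_mat_adj[OF elim] g_adj])
      finally show ?case .
    qed
  qed
  ultimately show ?thesis using fubini by (simp add: space_1)
qed

lemma integral_adj:
  fixes f :: "cmatrix \<Rightarrow> real"
  assumes f: "f \<in> borel_measurable \<mu>" and nonneg: "\<And>U. 0 \<le> f U"
  shows "(\<integral>U. f (mat_adj n U) \<partial>\<mu>) = integral\<^sup>L \<mu> f"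
proof -
  have f_adj: "(\<lambda>U. f (mat_adj n U)) \<in> borel_measurable \<mu>"
    using f by (rule measurable_continuous_map[OF continuous_on_mat_adj])
  have "(\<integral>\<^sup>+U. ennreal (f (mat_adj n U)) \<partial>\<mu>) = (\<integral>\<^sup>+U. ennreal (f U) \<partial>\<mu>)"
    using f by (intro nn_integral_adj) (simp add: measurable_haar)
  then show ?thesis
    using f f_adj nonneg by (simp add: integral_eq_nn_integral)
qed

lemma AE_column_sum: "j < n \<Longrightarrow> AE U in \<mu>. (\<Sum>i<n. entry_sq i j U) = 1"
  using AE_unitary by eventually_elim (simp add: unitary_column_sum)

text \<open>By exchangeability of the rows and the column sum, \<open>E|U\<^sub>i\<^sub>j|\<^sup>2 = 1/n\<close>.\<close>
lemma integral_entry_sq: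
  assumes "i < n" "j < n"
  shows "integral\<^sup>L \<mu> (entry_sq i j) = 1 / real n"
proof -
  have row_indep: "integral\<^sup>L \<mu> (entry_sq r j) = integral\<^sup>L \<mu> (entry_sq i j)" if "r < n" for r
  proof -
    have "(\<integral>U. entry_sq i j (swap_rows i r U) \<partial>\<mu>) = integral\<^sup>L \<mu> (entry_sq i j)"
      using that assms by (intro integral_swap_rows bounded_rv_measurable bounded_rv_entry_sq) auto
    then show ?thesis by (simp add: swap_idx_def)
  qed
  have "1 = (\<integral>U. (\<Sum>r<n. entry_sq r j U) \<partial>\<mu>)"
    using AE_column_sum[OF assms(2)] prob_space
    by (subst integral_cong_AE[where g = "\<lambda>_. 1"])
      (auto intro!: bounded_rv_measurable bounded_rv_intros bounded_rv_entry_sq)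
  also have "\<dots> = (\<Sum>r<n. integral\<^sup>L \<mu> (entry_sq r j))"
    by (intro Bochner_Integration.integral_sum integrable_bounded_rv bounded_rv_entry_sq)
  also have "\<dots> = real n * integral\<^sup>L \<mu> (entry_sq i j)"
    by (simp add: row_indep)
  finally show ?thesis using assms by (simp add: field_simps)
qed

end


section \<open>Centred row sums and the exchangeable-pair estimate\<close>

definition row_dev :: "nat \<Rightarrow> nat \<Rightarrow> nat \<Rightarrow> cmatrix \<Rightarrow> real" where
  "row_dev n q i U = (\<Sum>j<q. entry_sq i j U) - real q / real n"

definition block_dev :: "nat \<Rightarrow> nat \<Rightarrow> nat \<Rightarrow> cmatrix \<Rightarrow> real" where
  "block_dev n p q U = (\<Sum>i<p. row_dev n q i U)"

lemma T_block_eq_block_dev: "T_block p q U = block_dev n p q U + real p * real q / real n"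
  by (simp add: T_block_def block_dev_def row_dev_def entry_sq_def sum_subtractf)

lemma row_dev_swap_rows [simp]: "row_dev n q r (swap_rows i k U) = row_dev n q (swap_idx i k r) U"
  by (simp add: row_dev_def)

lemma sum_swap_idx:
  fixes f :: "nat \<Rightarrow> real"
  assumes "i < p" "p \<le> k"
  shows "(\<Sum>r<p. f (swap_idx i k r)) = (\<Sum>r<p. f r) - f i + f k"
proof -
  have "(\<Sum>r\<in>{..<p} - {i}. f (swap_idx i k r)) = (\<Sum>r\<in>{..<p} - {i}. f r)"
    using assms by (intro sum.cong) (auto simp: swap_idx_def)
  then show ?thesis
    using assms by (simp add: sum.remove[of "{..<p}" i] swap_idx_def)
qed

lemma block_dev_swap_rows:
  "i < p \<Longrightarrow> p \<le> k \<Longrightarrow>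
    block_dev n p q (swap_rows i k U) = block_dev n p q U - row_dev n q i U + row_dev n q k U"
  unfolding block_dev_def row_dev_swap_rows by (rule sum_swap_idx)

lemma sum_cross_differences:
  fixes d :: "nat \<Rightarrow> real"
  assumes "p \<le> n" "(\<Sum>k<n. d k) = 0"
  shows "(\<Sum>i<p. \<Sum>k\<in>{p..<n}. d i - d k) = real n * (\<Sum>i<p. d i)"
proof -
  have "(\<Sum>k<n. d k) = (\<Sum>i<p. d i) + (\<Sum>k\<in>{p..<n}. d k)"
    using assms(1) unfolding lessThan_atLeast0 by (simp add: sum.atLeastLessThan_concat)
  then have "(\<Sum>k\<in>{p..<n}. d k) = - (\<Sum>i<p. d i)"
    using assms(2) by simp
  then have "(\<Sum>i<p. \<Sum>k\<in>{p..<n}. d i - d k) = real (n - p) * (\<Sum>i<p. d i) + real p * (\<Sum>i<p. d i)"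
    by (simp add: sum_subtractf sum.distrib sum_distrib_left)
  also have "\<dots> = real n * (\<Sum>i<p. d i)"
    using assms(1) by (simp add: algebra_simps)
  finally show ?thesis .
qed

context haar
begin

lemma bounded_rv_row_dev: "bounded_rv \<mu> (row_dev n q i)"
  unfolding row_dev_def[abs_def] by (intro bounded_rv_intros bounded_rv_entry_sq)

lemma bounded_rv_block_dev: "bounded_rv \<mu> (block_dev n p q)"
  unfolding block_dev_def[abs_def] by (intro bounded_rv_intros bounded_rv_row_dev)

lemmas haar_bounded_rv_intros = bounded_rv_intros bounded_rv_entry_sq bounded_rv_row_dev bounded_rv_block_dev

lemma AE_sum_row_dev: "q \<le> n \<Longrightarrow> AE U in \<mu>. (\<Sum>r<n. row_dev n q r U) = 0"
proof -
  assume q: "q \<le> n"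
  have "AE U in \<mu>. \<forall>j\<in>{..<q}. (\<Sum>r<n. entry_sq r j U) = 1"
    using q by (intro eventually_ball_finite) (auto intro: AE_column_sum)
  then show ?thesis
  proof eventually_elim
    case (elim U)
    have "(\<Sum>r<n. \<Sum>j<q. entry_sq r j U) = real q"
      using elim by (subst sum.swap) simp
    then show ?case
      using q by (cases "n = 0") (simp_all add: row_dev_def sum_subtractf)
  qed
qed

lemma integral_block_dev:
  assumes "p \<le> n" "q \<le> n"
  shows "integral\<^sup>L \<mu> (block_dev n p q) = 0"
proof -
  have "integral\<^sup>L \<mu> (row_dev n q i) = 0" if "i < p" for i
  proof -
    have "integral\<^sup>L \<mu> (row_dev n q i) = (\<Sum>j<q. integral\<^sup>L \<mu> (entry_sq i j)) - real q / real n"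
      unfolding row_dev_def[abs_def]
      by (simp add: integrable_bounded_rv haar_bounded_rv_intros prob_space)
    then show ?thesis
      using that assms by (simp add: integral_entry_sq)
  qed
  then show ?thesis
    unfolding block_dev_def[abs_def]
    by (simp add: integrable_bounded_rv haar_bounded_rv_intros)
qed

lemma integral_row_dev_power4:
  assumes "i < n"
  shows "(\<integral>U. row_dev n q i U ^ 4 \<partial>\<mu>) = (\<integral>U. row_dev n q 0 U ^ 4 \<partial>\<mu>)"
proof -
  have "(\<integral>U. row_dev n q 0 (swap_rows 0 i U) ^ 4 \<partial>\<mu>) = (\<integral>U. row_dev n q 0 U ^ 4 \<partial>\<mu>)"
    using assms by (intro integral_swap_rows bounded_rv_measurable haar_bounded_rv_intros) auto
  then show ?thesis by (simp add: swap_idx_def)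
qed

text \<open>One exchangeable pair: swap row \<open>i\<close> of the block with row \<open>k\<close> outside it.\<close>
lemma swap_pair_estimate:
  assumes ik: "i < p" "p \<le> k" "k < n"
  shows "(\<integral>U. (row_dev n q i U - row_dev n q k U) * block_dev n p q U ^ 3 \<partial>\<mu>)
     \<le> (\<integral>U. block_dev n p q U ^ 4 \<partial>\<mu>) / (4 * real p) + 36 * real p * (\<integral>U. row_dev n q 0 U ^ 4 \<partial>\<mu>)"
proof -
  define D where "D U = row_dev n q i U - row_dev n q k U" for U
  define X where "X = block_dev n p q"
  have D: "bounded_rv \<mu> D" and X: "bounded_rv \<mu> X"
    unfolding D_def[abs_def] X_def by (intro haar_bounded_rv_intros)+
  have swap_X: "X (swap_rows i k U) = X U - D U" and swap_D: "D (swap_rows i k U) = - D U" for U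
    using ik by (simp_all add: X_def D_def block_dev_swap_rows swap_idx_def)
  have invariant: "(\<integral>U. f (swap_rows i k U) \<partial>\<mu>) = integral\<^sup>L \<mu> f" if "bounded_rv \<mu> f" for f
    using ik that by (intro integral_swap_rows bounded_rv_measurable) auto
  have "(\<integral>U. D U * (X U - D U) ^ 3 \<partial>\<mu>) = - (\<integral>U. D U * X U ^ 3 \<partial>\<mu>)"
    using invariant[of "\<lambda>U. D U * X U ^ 3"] D X by (simp add: swap_X swap_D bounded_rv_intros)
  moreover have "(\<integral>U. (X U - D U) ^ 4 \<partial>\<mu>) = (\<integral>U. X U ^ 4 \<partial>\<mu>)"
    using invariant[of "\<lambda>U. X U ^ 4"] X by (simp add: swap_X bounded_rv_intros)
  ultimately have pair: "(\<integral>U. D U * X U ^ 3 \<partial>\<mu>)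
      \<le> (\<integral>U. X U ^ 4 \<partial>\<mu>) / (4 * real p) + (9 * real p / 4) * (\<integral>U. D U ^ 4 \<partial>\<mu>)"
    using ik by (intro exchangeable_pair_bound D X) auto
  have "(\<integral>U. D U ^ 4 \<partial>\<mu>) \<le> (\<integral>U. 8 * (row_dev n q i U ^ 4 + row_dev n q k U ^ 4) \<partial>\<mu>)"
    unfolding D_def by (intro integral_mono integrable_bounded_rv haar_bounded_rv_intros power4_diff_le)
  also have "\<dots> = 16 * (\<integral>U. row_dev n q 0 U ^ 4 \<partial>\<mu>)"
    using ik integral_row_dev_power4[of i q] integral_row_dev_power4[of k q]
    by (simp add: integrable_bounded_rv haar_bounded_rv_intros)
  finally have "(9 * real p / 4) * (\<integral>U. D U ^ 4 \<partial>\<mu>) \<le> (9 * real p / 4) * (16 * (\<integral>U. row_dev n q 0 U ^ 4 \<partial>\<mu>))"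
    by (intro mult_left_mono) auto
  then show ?thesis
    using pair by (simp add: D_def X_def)
qed

end


context haar
begin

text \<open>Summing the exchangeable-pair estimate over all pairs (row in the block, row outside)
  reproduces \<open>n E[X\<^sup>4]\<close>, because the centred row sums of a unitary add up to zero.\<close>
lemma block_dev_fourth_moment_le_row_dev:
  assumes p: "1 \<le> p" "p \<le> n" and q: "q \<le> n"
  shows "(\<integral>U. block_dev n p q U ^ 4 \<partial>\<mu>) \<le> 48 * (real p)\<^sup>2 * (\<integral>U. row_dev n q 0 U ^ 4 \<partial>\<mu>)"
proof -
  define X where "X = block_dev n p q"
  define E4 where "E4 = (\<integral>U. X U ^ 4 \<partial>\<mu>)"
  define a where "a = (\<integral>U. row_dev n q 0 U ^ 4 \<partial>\<mu>)"
  define F where "F i k U = (row_dev n q i U - row_dev n q k U) * X U ^ 3" for i k U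
  have F: "bounded_rv \<mu> (F i k)" for i k
    unfolding F_def[abs_def] X_def by (intro haar_bounded_rv_intros)
  have "AE U in \<mu>. (\<Sum>i<p. \<Sum>k\<in>{p..<n}. F i k U) = real n * X U ^ 4"
    using AE_sum_row_dev[OF q]
  proof eventually_elim
    case (elim U)
    have "(\<Sum>i<p. \<Sum>k\<in>{p..<n}. F i k U) = (\<Sum>i<p. \<Sum>k\<in>{p..<n}. row_dev n q i U - row_dev n q k U) * X U ^ 3"
      by (simp add: F_def sum_distrib_right)
    also have "\<dots> = real n * X U * X U ^ 3"
      using sum_cross_differences[OF p(2) elim] by (simp add: X_def block_dev_def)
    finally show ?case by (simp add: eval_nat_numeral)
  qed
  then have "(\<integral>U. (\<Sum>i<p. \<Sum>k\<in>{p..<n}. F i k U) \<partial>\<mu>) = (\<integral>U. real n * X U ^ 4 \<partial>\<mu>)"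
    by (intro integral_cong_AE bounded_rv_measurable bounded_rv_intros F)
      (simp_all add: X_def bounded_rv_block_dev)
  then have "real n * E4 = (\<Sum>i<p. \<Sum>k\<in>{p..<n}. integral\<^sup>L \<mu> (F i k))"
    by (simp add: E4_def integrable_bounded_rv F bounded_rv_sum)
  also have "\<dots> \<le> (\<Sum>i<p. \<Sum>k\<in>{p..<n}. E4 / (4 * real p) + 36 * real p * a)"
    using swap_pair_estimate by (intro sum_mono) (simp add: F_def[abs_def] X_def E4_def a_def)
  also have "\<dots> = real (n - p) * E4 / 4 + 36 * (real p)\<^sup>2 * real (n - p) * a"
    using p by (simp add: field_simps power2_eq_square)
  also have "\<dots> \<le> real n * E4 / 4 + 36 * (real p)\<^sup>2 * real n * a"
  proof -
    have "0 \<le> E4" "0 \<le> a" by (simp_all add: E4_def a_def zero_le_even_power)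
    then show ?thesis by (intro add_mono divide_right_mono mult_right_mono mult_left_mono) auto
  qed
  finally have "real n * (3 * E4) \<le> real n * (144 * (real p)\<^sup>2 * a)"
    by (simp add: algebra_simps)
  then show ?thesis
    using p by (simp add: E4_def a_def X_def)
qed

lemma row_dev_mat_adj:
  assumes "1 \<le> q" "q \<le> n"
  shows "row_dev n q 0 (mat_adj n U) = block_dev n q 1 U"
  using assms by (simp add: row_dev_def block_dev_def entry_sq_def mat_adj_def sum_subtractf)

end

definition moment_const :: real where
  "moment_const = 8 * 4100 ^ 3 + 1"

text \<open>The moment estimates for a single entry use the Hadamard rotation and need \<open>n \<ge> 2\<close>.\<close>
locale haar2 = haar +
  assumes n_ge_2: "2 \<le> n"
begin

text \<open>Write \<open>z = |U\<^sub>0\<^sub>0|\<^sup>2\<close> and \<open>w = |U\<^sub>1\<^sub>0|\<^sup>2\<close>.  Applying \<open>hadamard_power_bound\<close> pointwise and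
  using that the rotated matrix is again Haar distributed bounds \<open>E[z\<^sup>a]\<close> by \<open>E[z\<^sup>a\<^sup>-\<^sup>1 w]\<close>.\<close>
lemma entry_sq_power_le_mixed:
  assumes a: "1 \<le> a"
  shows "(\<integral>U. entry_sq 0 0 U ^ a \<partial>\<mu>) \<le> (4 + 8 ^ a) * (\<integral>U. entry_sq 0 0 U ^ (a - 1) * entry_sq 1 0 U \<partial>\<mu>)"
proof -
  define f where "f U = entry_sq 0 0 U ^ (a - 1) * entry_sq 1 0 U" for U
  define H where "H = mat_mult n (hadamard_mat n)"
  have H: "unitary_mat n (hadamard_mat n)" by (rule hadamard_mat_unitary[OF n_ge_2])
  have f: "bounded_rv \<mu> f" unfolding f_def[abs_def] by (intro haar_bounded_rv_intros)
  have fH: "bounded_rv \<mu> (\<lambda>U. f (H U))" unfolding H_def by (rule bounded_rv_left_mult[OF H f])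
  have pointwise: "entry_sq 0 0 U ^ a \<le> 4 * f U + 8 ^ a * f (H U)" for U
    unfolding f_def H_def entry_sq_def mat_mult_hadamard_first_column[OF n_ge_2]
    using hadamard_power_bound[OF a, of "U 0 0" "U 1 0"] by (simp add: algebra_simps)
  have "(\<integral>U. entry_sq 0 0 U ^ a \<partial>\<mu>) \<le> (\<integral>U. 4 * f U + 8 ^ a * f (H U) \<partial>\<mu>)"
    by (intro integral_mono integrable_bounded_rv haar_bounded_rv_intros f fH pointwise)
  also have "\<dots> = 4 * integral\<^sup>L \<mu> f + 8 ^ a * (\<integral>U. f (H U) \<partial>\<mu>)"
    by (simp add: integrable_bounded_rv f fH)
  also have "(\<integral>U. f (H U) \<partial>\<mu>) = integral\<^sup>L \<mu> f"
    unfolding H_def by (rule integral_left_mult[OF H bounded_rv_measurable[OF f]])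
  finally have "(\<integral>U. entry_sq 0 0 U ^ a \<partial>\<mu>) \<le> (4 + 8 ^ a) * integral\<^sup>L \<mu> f"
    by (simp add: algebra_simps)
  then show ?thesis by (simp add: f_def[abs_def])
qed

text \<open>Since \<open>w\<close> has the law of each of the \<open>n - 1\<close> entries \<open>|U\<^sub>i\<^sub>0|\<^sup>2\<close>, \<open>i \<ge> 1\<close>, jointly with \<open>z\<close>,
  and these entries sum to \<open>1 - z\<close>, we get \<open>E[z\<^sup>b w] \<le> E[z\<^sup>b]/(n - 1)\<close>.\<close>
lemma mixed_moment_le:
  "real (n - 1) * (\<integral>U. entry_sq 0 0 U ^ b * entry_sq 1 0 U \<partial>\<mu>) \<le> (\<integral>U. entry_sq 0 0 U ^ b \<partial>\<mu>)"
proof -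
  define f where "f i U = entry_sq 0 0 U ^ b * entry_sq i 0 U" for i U
  have f: "bounded_rv \<mu> (f i)" for i
    unfolding f_def[abs_def] by (intro haar_bounded_rv_intros)
  have same: "integral\<^sup>L \<mu> (f i) = integral\<^sup>L \<mu> (f 1)" if "i \<in> {1..<n}" for i
  proof -
    have "(\<integral>U. f 1 (swap_rows 1 i U) \<partial>\<mu>) = integral\<^sup>L \<mu> (f 1)"
      using that n_ge_2 by (intro integral_swap_rows bounded_rv_measurable f) auto
    then show ?thesis using that by (simp add: f_def[abs_def] swap_idx_def)
  qed
  have "AE U in \<mu>. (\<Sum>i<n. entry_sq i 0 U) = 1"
    using n_ge_2 by (intro AE_column_sum) simp
  then have "AE U in \<mu>. (\<Sum>i\<in>{1..<n}. f i U) = entry_sq 0 0 U ^ b - f 0 U"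
  proof eventually_elim
    case (elim U)
    then have "(\<Sum>i\<in>{1..<n}. entry_sq i 0 U) = 1 - entry_sq 0 0 U"
      using n_ge_2 unfolding lessThan_atLeast0 by (subst (asm) sum.atLeast_Suc_lessThan) auto
    then show ?case by (simp add: f_def sum_distrib_left[symmetric] right_diff_distrib)
  qed
  then have "(\<integral>U. (\<Sum>i\<in>{1..<n}. f i U) \<partial>\<mu>) = (\<integral>U. entry_sq 0 0 U ^ b - f 0 U \<partial>\<mu>)"
    by (intro integral_cong_AE bounded_rv_measurable haar_bounded_rv_intros f) auto
  moreover have "(\<Sum>i\<in>{1..<n}. integral\<^sup>L \<mu> (f i)) = (\<Sum>i\<in>{1..<n}. integral\<^sup>L \<mu> (f 1))"
    by (rule sum.cong[OF refl same])
  then have "real (n - 1) * integral\<^sup>L \<mu> (f 1) = (\<Sum>i\<in>{1..<n}. integral\<^sup>L \<mu> (f i))"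
    by simp
  ultimately have "real (n - 1) * integral\<^sup>L \<mu> (f 1) = (\<integral>U. entry_sq 0 0 U ^ b \<partial>\<mu>) - integral\<^sup>L \<mu> (f 0)"
    by (simp add: integrable_bounded_rv haar_bounded_rv_intros f)
  moreover have "0 \<le> integral\<^sup>L \<mu> (f 0)" by (simp add: f_def)
  ultimately have "real (n - 1) * integral\<^sup>L \<mu> (f 1) \<le> (\<integral>U. entry_sq 0 0 U ^ b \<partial>\<mu>)"
    by linarith
  then show ?thesis by (simp add: f_def[abs_def])
qed

lemma entry_sq_moment_recursion:
  assumes a: "2 \<le> a" "a \<le> 4"
  shows "(\<integral>U. entry_sq 0 0 U ^ a \<partial>\<mu>) \<le> 4100 / real (n - 1) * (\<integral>U. entry_sq 0 0 U ^ (a - 1) \<partial>\<mu>)"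
proof -
  define G where "G = (\<integral>U. entry_sq 0 0 U ^ (a - 1) * entry_sq 1 0 U \<partial>\<mu>)"
  have "(8::real) ^ a \<le> 8 ^ 4" using a by (intro power_increasing) auto
  moreover have "0 \<le> G" by (simp add: G_def)
  ultimately have "(4 + 8 ^ a) * G \<le> 4100 * G"
    by (intro mult_right_mono) auto
  with entry_sq_power_le_mixed[of a] a have "(\<integral>U. entry_sq 0 0 U ^ a \<partial>\<mu>) \<le> 4100 * G"
    by (simp add: G_def)
  also have "\<dots> \<le> 4100 / real (n - 1) * (\<integral>U. entry_sq 0 0 U ^ (a - 1) \<partial>\<mu>)"
    using mixed_moment_le[of "a - 1"] n_ge_2 by (simp add: G_def field_simps)
  finally show ?thesis .
qed

text \<open>Iterating from \<open>E[z] = 1/n\<close>: \<open>E[z\<^sup>4] \<le> 4100\<^sup>3 / ((n-1)\<^sup>3 n) \<le> 8 \<cdot> 4100\<^sup>3 / n\<^sup>4\<close>.\<close>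
lemma entry_sq_fourth_moment: "(\<integral>U. entry_sq 0 0 U ^ 4 \<partial>\<mu>) \<le> 8 * 4100 ^ 3 / real n ^ 4"
proof -
  define c where "c = 4100 / (real n - 1)"
  define e where "e k = (\<integral>U. entry_sq 0 0 U ^ k \<partial>\<mu>)" for k
  have c: "0 \<le> c" using n_ge_2 by (simp add: c_def)
  have step: "e k \<le> c * e (k - 1)" if "2 \<le> k" "k \<le> 4" for k
    using entry_sq_moment_recursion[OF that] n_ge_2 by (simp add: e_def c_def)
  have "e 1 = 1 / real n"
    using integral_entry_sq[of 0 0] n_ge_2 by (simp add: e_def)
  moreover have "e 4 \<le> c * e 3" "e 3 \<le> c * e 2" "e 2 \<le> c * e 1"
    using step[of 4] step[of 3] step[of 2] by simp_all
  then have "e 4 \<le> c * (c * (c * e 1))"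
    using c by (meson mult_left_mono order_trans)
  ultimately have "e 4 \<le> 4100 ^ 3 / ((real n - 1) ^ 3 * real n)"
    by (simp add: c_def power3_eq_cube mult.assoc)
  also have "\<dots> = 8 * 4100 ^ 3 / (8 * ((real n - 1) ^ 3 * real n))"
    by simp
  also have "\<dots> \<le> 8 * 4100 ^ 3 / real n ^ 4"
  proof (rule divide_left_mono)
    have "(real n / 2) ^ 3 \<le> (real n - 1) ^ 3" using n_ge_2 by (intro power_mono) auto
    then have "real n * real n ^ 3 \<le> real n * (8 * (real n - 1) ^ 3)"
      by (intro mult_left_mono) (auto simp: power_divide)
    then show "real n ^ 4 \<le> 8 * ((real n - 1) ^ 3 * real n)"
      by (simp add: eval_nat_numeral algebra_simps)
  next
    show "0 < 8 * ((real n - 1) ^ 3 * real n) * real n ^ 4"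
      using n_ge_2 by (intro mult_pos_pos zero_less_power) auto
  qed simp
  finally show ?thesis by (simp add: e_def)
qed

lemma row_dev_1_fourth_moment: "(\<integral>U. row_dev n 1 0 U ^ 4 \<partial>\<mu>) \<le> moment_const / real n ^ 4"
proof -
  have row_dev_1: "row_dev n 1 0 U = entry_sq 0 0 U - 1 / real n" for U
    by (simp add: row_dev_def)
  have "(\<integral>U. row_dev n 1 0 U ^ 4 \<partial>\<mu>) \<le> (\<integral>U. entry_sq 0 0 U ^ 4 + (1 / real n) ^ 4 \<partial>\<mu>)"
    unfolding row_dev_1
    by (intro integral_mono integrable_bounded_rv haar_bounded_rv_intros power4_diff_nonneg_le) auto
  also have "\<dots> \<le> 8 * 4100 ^ 3 / real n ^ 4 + 1 / real n ^ 4"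
    using entry_sq_fourth_moment by (simp add: integrable_bounded_rv haar_bounded_rv_intros prob_space power_divide)
  finally show ?thesis by (simp add: moment_const_def add_divide_distrib)
qed

text \<open>Adjoint invariance turns the row deviation over \<open>q\<close> columns into a block deviation
  of shape \<open>q \<times> 1\<close>, to which the exchangeable-pair estimate applies once more.\<close>
lemma row_dev_fourth_moment:
  assumes q: "1 \<le> q" "q \<le> n"
  shows "(\<integral>U. row_dev n q 0 U ^ 4 \<partial>\<mu>) \<le> 48 * (real q)\<^sup>2 * (moment_const / real n ^ 4)"
proof -
  have "(\<integral>U. row_dev n q 0 U ^ 4 \<partial>\<mu>) = (\<integral>U. row_dev n q 0 (mat_adj n U) ^ 4 \<partial>\<mu>)"
    by (rule integral_adj[symmetric]) (simp_all add: bounded_rv_measurable haar_bounded_rv_intros zero_le_even_power)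
  also have "\<dots> = (\<integral>U. block_dev n q 1 U ^ 4 \<partial>\<mu>)"
    using q by (simp add: row_dev_mat_adj)
  also have "\<dots> \<le> 48 * (real q)\<^sup>2 * (\<integral>U. row_dev n 1 0 U ^ 4 \<partial>\<mu>)"
    using block_dev_fourth_moment_le_row_dev[of q 1] q n_ge_2 by simp
  also have "\<dots> \<le> 48 * (real q)\<^sup>2 * (moment_const / real n ^ 4)"
    by (intro mult_left_mono row_dev_1_fourth_moment) auto
  finally show ?thesis .
qed

lemma abs_cumulant4_T_block_le:
  assumes p: "1 \<le> p" "p \<le> n" and q: "1 \<le> q" "q \<le> n"
  shows "\<bar>cumulant4 \<mu> (T_block p q)\<bar> \<le> 3 * 48\<^sup>2 * moment_const * (real p ^ 2 * real q ^ 2) / real n ^ 4"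
proof -
  have T: "T_block p q = (\<lambda>U. block_dev n p q U + real p * real q / real n)"
    by (simp add: fun_eq_iff T_block_eq_block_dev)
  have "bounded_rv \<mu> (T_block p q)"
    unfolding T by (intro haar_bounded_rv_intros)
  moreover have "expectation (T_block p q) = real p * real q / real n"
    using integral_block_dev[OF p(2) q(2)] by (simp add: T integrable_bounded_rv bounded_rv_block_dev prob_space)
  ultimately have "\<bar>cumulant4 \<mu> (T_block p q)\<bar> \<le> 3 * (\<integral>U. block_dev n p q U ^ 4 \<partial>\<mu>)"
    using abs_cumulant4_le[of "T_block p q"] by (simp add: T)
  also have "\<dots> \<le> 3 * (48 * (real p)\<^sup>2 * (\<integral>U. row_dev n q 0 U ^ 4 \<partial>\<mu>))"
    using block_dev_fourth_moment_le_row_dev[OF p q(2)] by simp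
  also have "\<dots> \<le> 3 * (48 * (real p)\<^sup>2 * (48 * (real q)\<^sup>2 * (moment_const / real n ^ 4)))"
    by (intro mult_left_mono row_dev_fourth_moment q) auto
  also have "\<dots> = 3 * 48\<^sup>2 * moment_const * (real p ^ 2 * real q ^ 2) / real n ^ 4"
    by (simp add: field_simps)
  finally show ?thesis .
qed

end

theorem mainTheorem4:
  shows "\<exists>C::real. \<forall>n p q \<mu>.
           2 \<le> n \<longrightarrow> 1 \<le> p \<longrightarrow> p \<le> n \<longrightarrow> 1 \<le> q \<longrightarrow> q \<le> n \<longrightarrow>
           haar_unitary n \<mu> \<longrightarrow>
           \<bar>cumulant4 \<mu> (T_block p q)\<bar> \<le> C * (real p ^ 2 * real q ^ 2) / real n ^ 4"
proof (intro exI allI impI)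
  fix n p q :: nat and \<mu> :: "cmatrix measure"
  assume "2 \<le> n" "1 \<le> p" "p \<le> n" "1 \<le> q" "q \<le> n" "haar_unitary n \<mu>"
  then interpret haar2 n \<mu> by unfold_locales
  show "\<bar>cumulant4 \<mu> (T_block p q)\<bar> \<le> 3 * 48\<^sup>2 * moment_const * (real p ^ 2 * real q ^ 2) / real n ^ 4"
    by (rule abs_cumulant4_T_block_le) fact+
qed

end
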